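(* Let $N_1,\dots,N_d$ be positive integers. For any integer $s\ge2$ and any $X\subseteq[N_1]\times\cdots\times[N_d]$, \[ \sum_{\mathbf{b}\in\mathbb{Z}^d\setminus\{\mathbf{0}\}}|U^d(X,\mathbf{b},s)|\le|X|\prod_{i=1}^d\Big(4\frac{N_i}{s}+1\Big). \]
   Context: $[N]=\{1,\dots,N\}$. For $\mathbf{b}\in\mathbb{Z}^d\setminus\{\mathbf{0}\}$, points $\mathbf{x},\mathbf{x}'$ are congruent mod $\mathbf{b}$ if $\mathbf{x}-\mathbf{x}'\in\mathbb{Z}\mathbf{b}$. $U^d(X,\mathbf{b},s)$ is the set of $\mathbf{x}\in X$ such that $|\{\mathbf{x}'\in X:\mathbf{x}'\equiv\mathbf{x}\pmod{\mathbf{b}}\}|\ge s$. *)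

theory Defs
  imports "HOL-Analysis.Analysis"
begin

text \<open>Points of Z^d are vectors int^'d, with 'd a finite index type (d = CARD('d)).
  x and x' are congruent mod b if x - x' lies in Z b.\<close>
definition cong_vec :: "int^'d \<Rightarrow> int^'d \<Rightarrow> int^'d \<Rightarrow> bool" where
  "cong_vec b x x' \<longleftrightarrow> (\<exists>k::int. x - x' = k *s b)"

definition U :: "(int^'d) set \<Rightarrow> int^'d \<Rightarrow> nat \<Rightarrow> (int^'d) set" where
  "U X b s = {x \<in> X. card {x' \<in> X. cong_vec b x' x} \<ge> s}"

definition box_grid :: "('d \<Rightarrow> nat) \<Rightarrow> (int^'d) set" where
  "box_grid N = {x. \<forall>i. 1 \<le> x$i \<and> x$i \<le> int (N i)}"

end

theory Submission
  imports Defs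
begin

text \<open>If \<open>U(X,b,s)\<close> is nonempty, some line \<open>x + \<int>b\<close> meets \<open>X\<close> in at least \<open>s\<close> points;
  the two extreme ones differ by \<open>k b\<close> with \<open>k \<ge> s - 1\<close>, and both lie in the box, so
  \<open>(s - 1) |b\<^sub>i| \<le> N\<^sub>i - 1\<close> for every \<open>i\<close>. Hence only the
  \<open>\<Prod>\<^sub>i (2 m\<^sub>i + 1)\<close> vectors with \<open>|b\<^sub>i| \<le> m\<^sub>i = \<lfloor>(N\<^sub>i - 1)/(s - 1)\<rfloor>\<close> contribute,
  each term is at most \<open>|X|\<close>, and \<open>2 m\<^sub>i + 1 \<le> 4 N\<^sub>i / s + 1\<close>.\<close>

lemma bij_betw_vec_nth_components:
  "bij_betw vec_nth {x::'a^'n. \<forall>i. x$i \<in> A i} (PiE UNIV A)"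
  by (rule bij_betwI[where g = vec_lambda]) auto

lemma card_vec_components:
  "card {x::'a^'n. \<forall>i. x$i \<in> A i} = (\<Prod>i\<in>UNIV. card (A i))"
  using bij_betw_same_card[OF bij_betw_vec_nth_components] by (simp add: card_PiE)

lemma finite_vec_components:
  assumes "\<And>i. finite (A i)"
  shows "finite {x::'a^'n. \<forall>i. x$i \<in> A i}"
  unfolding bij_betw_finite[OF bij_betw_vec_nth_components] using assms by (intro finite_PiE) auto

lemma box_grid_eq: "box_grid N = {x. \<forall>i. x$i \<in> {1..int (N i)}}"
  by (simp add: box_grid_def)

lemma finite_box_grid: "finite (box_grid N)"
  unfolding box_grid_eq by (rule finite_vec_components) simp

lemma box_grid_component_dist:
  assumes "x \<in> box_grid N" and "y \<in> box_grid N"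
  shows "\<bar>x$i - y$i\<bar> \<le> int (N i) - 1"
proof -
  have "1 \<le> x$i" "x$i \<le> int (N i)" "1 \<le> y$i" "y$i \<le> int (N i)"
    using assms by (auto simp: box_grid_def)
  then show ?thesis by linarith
qed

lemma inj_line:
  fixes b :: "'a::idom^'n"
  assumes "b \<noteq> 0"
  shows "inj (\<lambda>k. x + k *s b)"
proof
  obtain j where "b$j \<noteq> 0" using assms by (metis vec_eq_iff zero_index)
  fix k l assume "x + k *s b = x + l *s b"
  then have "k * b$j = l * b$j" by (metis add_left_cancel vector_smult_component)
  with \<open>b$j \<noteq> 0\<close> show "k = l" by simp
qed

lemma cong_class_eq_line:
  "{x' \<in> X. cong_vec b x' x} = (\<lambda>k. x + k *s b) ` ((\<lambda>k. x + k *s b) -` X)"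
  by (force simp: cong_vec_def algebra_simps)

lemma finite_int_set_spread:
  fixes K :: "int set"
  assumes "finite K" and "card K \<ge> n" and "n \<ge> 1"
  obtains k l where "k \<in> K" "l \<in> K" "int n - 1 \<le> l - k"
proof
  have "K \<noteq> {}" using assms by auto
  then show "Min K \<in> K" "Max K \<in> K" using \<open>finite K\<close> by simp_all
  then have "Min K \<le> Max K" using \<open>finite K\<close> by simp
  have "K \<subseteq> {Min K..Max K}" using \<open>finite K\<close> by auto
  then have "n \<le> card {Min K..Max K}" using assms(2) card_mono[of "{Min K..Max K}" K] by simp
  then show "int n - 1 \<le> Max K - Min K" using \<open>Min K \<le> Max K\<close> by simp
qed

lemma U_nonempty_coord_bound:
  fixes X :: "(int^'d) set"
  assumes "s \<ge> 1" and "X \<subseteq> box_grid N" and "b \<noteq> 0" and "x \<in> U X b s"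
  shows "(int s - 1) * \<bar>b$i\<bar> \<le> int (N i) - 1"
proof -
  define K where "K = (\<lambda>k. x + k *s b) -` X"
  have "finite X" using assms(2) finite_box_grid finite_subset by blast
  then have "finite K" unfolding K_def using inj_line[OF \<open>b \<noteq> 0\<close>] by (simp add: finite_vimageI)
  have "s \<le> card {x' \<in> X. cong_vec b x' x}" using assms(4) by (simp add: U_def)
  also have "\<dots> = card K"
    unfolding cong_class_eq_line K_def
    by (rule card_image, rule inj_on_subset[OF inj_line[OF \<open>b \<noteq> 0\<close>]]) simp
  finally obtain k l where "k \<in> K" "l \<in> K" and spread: "int s - 1 \<le> l - k"
    using finite_int_set_spread \<open>finite K\<close> assms(1) by blast
  then have "x + l *s b \<in> box_grid N" "x + k *s b \<in> box_grid N"
    using assms(2) unfolding K_def by auto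
  from box_grid_component_dist[OF this, of i]
  have "\<bar>(l - k) * b$i\<bar> \<le> int (N i) - 1" by (simp add: algebra_simps)
  moreover have "(int s - 1) * \<bar>b$i\<bar> \<le> (l - k) * \<bar>b$i\<bar>"
    using spread by (intro mult_right_mono) auto
  ultimately show ?thesis using spread assms(1) by (simp add: abs_mult)
qed

definition coord_bound :: "nat \<Rightarrow> nat \<Rightarrow> int" where
  "coord_bound n s = (int n - 1) div (int s - 1)"

lemma abs_le_coord_bound:
  assumes "s \<ge> 2" and "(int s - 1) * \<bar>c\<bar> \<le> int n - 1"
  shows "\<bar>c\<bar> \<le> coord_bound n s"
proof -
  have "\<bar>c\<bar> = ((int s - 1) * \<bar>c\<bar>) div (int s - 1)" using assms(1) by simp
  also have "\<dots> \<le> coord_bound n s" unfolding coord_bound_def using assms by (intro zdiv_mono1) auto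
  finally show ?thesis .
qed

lemma coord_bound_times_le: "s \<ge> 2 \<Longrightarrow> coord_bound n s * int s \<le> 2 * int n"
proof -
  assume "s \<ge> 2"
  define m where "m = coord_bound n s"
  have "m * (int s - 1) \<le> int n - 1" unfolding m_def coord_bound_def
    using div_mult_mod_eq[of "int n - 1" "int s - 1"] pos_mod_sign[of "int s - 1" "int n - 1"] \<open>s \<ge> 2\<close>
    by linarith
  show "m * int s \<le> 2 * int n"
  proof (cases "m \<ge> 0")
    case True
    then have "m \<le> m * (int s - 1)" using mult_left_mono[of 1 "int s - 1" m] \<open>s \<ge> 2\<close> by simp
    moreover have "m * int s = m * (int s - 1) + m" by (simp add: algebra_simps)
    ultimately show ?thesis using \<open>m * (int s - 1) \<le> int n - 1\<close> by linarith
  next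
    case False
    then have "m * int s \<le> 0" by (simp add: mult_nonpos_nonneg)
    then show ?thesis by simp
  qed
qed

lemma card_coord_bound_interval_le:
  assumes "s \<ge> 2"
  shows "real (card {-coord_bound n s..coord_bound n s}) \<le> 4 * real n / real s + 1"
proof (cases "coord_bound n s < 0")
  case True
  then show ?thesis by simp
next
  case False
  have "real_of_int (coord_bound n s * int s) \<le> real_of_int (2 * int n)"
    using coord_bound_times_le[OF assms] by (simp only: of_int_le_iff)
  then have "real_of_int (coord_bound n s) \<le> 2 * real n / real s"
    using assms by (simp add: pos_le_divide_eq)
  then show ?thesis using False by simp
qed

lemma card_coord_bound_box_le:
  assumes "s \<ge> 2"
  shows "real (card {b::int^'d. \<forall>i. b$i \<in> {-coord_bound (N i) s..coord_bound (N i) s}})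
    \<le> (\<Prod>i\<in>UNIV. 4 * real (N i) / real s + 1)"
  unfolding card_vec_components of_nat_prod
  using assms by (intro prod_mono conjI card_coord_bound_interval_le) simp_all

lemma moduli_subset_coord_bound_box:
  assumes "s \<ge> 2" and "X \<subseteq> box_grid N"
  shows "{b. b \<noteq> 0 \<and> U X b s \<noteq> {}}
    \<subseteq> {b. \<forall>i. b$i \<in> {-coord_bound (N i) s..coord_bound (N i) s}}"
proof
  fix b assume "b \<in> {b. b \<noteq> 0 \<and> U X b s \<noteq> {}}"
  then obtain x where "b \<noteq> 0" "x \<in> U X b s" by blast
  then have bound: "\<bar>b$i\<bar> \<le> coord_bound (N i) s" for i
    using assms by (intro abs_le_coord_bound U_nonempty_coord_bound) auto
  have "b$i \<in> {-coord_bound (N i) s..coord_bound (N i) s}" for i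
    using bound[of i] unfolding atLeastAtMost_iff by linarith
  then show "b \<in> {b. \<forall>i. b$i \<in> {-coord_bound (N i) s..coord_bound (N i) s}}" by blast
qed

theorem lemma2p3:
  fixes N :: "'d::finite \<Rightarrow> nat" and X :: "(int^'d) set" and s :: nat
  assumes "\<forall>i. N i > 0" and "s \<ge> 2" and "X \<subseteq> box_grid N"
  shows "finite {b. b \<noteq> 0 \<and> U X b s \<noteq> {}} \<and>
    real (\<Sum>b\<in>{b. b \<noteq> 0 \<and> U X b s \<noteq> {}}. card (U X b s))
      \<le> real (card X) * (\<Prod>i\<in>UNIV. 4 * real (N i) / real s + 1)"
proof -
  define B :: "(int^'d) set" where "B = {b. \<forall>i. b$i \<in> {-coord_bound (N i) s..coord_bound (N i) s}}"
  define S where "S = {b. b \<noteq> 0 \<and> U X b s \<noteq> {}}"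
  have "S \<subseteq> B" unfolding S_def B_def by (rule moduli_subset_coord_bound_box[OF assms(2,3)])
  moreover have "finite B" unfolding B_def by (rule finite_vec_components) simp
  ultimately have "finite S" by (rule finite_subset)
  have "finite X" using assms(3) finite_box_grid finite_subset by blast
  have "(\<Sum>b\<in>S. card (U X b s)) \<le> (\<Sum>b\<in>S. card X)"
    using \<open>finite X\<close> by (intro sum_mono card_mono) (auto simp: U_def)
  also have "\<dots> \<le> card X * card B"
    using \<open>S \<subseteq> B\<close> \<open>finite B\<close> by (simp add: card_mono)
  finally have "real (\<Sum>b\<in>S. card (U X b s)) \<le> real (card X) * real (card B)"
    by (simp only: of_nat_le_iff flip: of_nat_mult)
  also have "\<dots> \<le> real (card X) * (\<Prod>i\<in>UNIV. 4 * real (N i) / real s + 1)"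
    unfolding B_def using assms(2) by (intro mult_left_mono card_coord_bound_box_le) auto
  finally show ?thesis using \<open>finite S\<close> unfolding S_def by simp
qed

end
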